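(* Let $Q$ be a square region of width (side length) $R$ and let $r$ be an awake robot positioned at the center of $Q$ which knows $Q$ and the initial positions of a set $S$ of sleeping robots whose initial positions all lie in $Q$. If no robot other than those in $\{r\}\cup S$ takes action in $Q$, then $r$ can wake up all robots of $S$ within time $5R$.
   Context: Model: robots in the Euclidean plane; sleeping robots do nothing until woken. Awake robots know the global coordinates, share a global clock, can compute, move at speed $1$ (distance $\delta$ takes time $\delta$) or wait, and exchange information only with co-located robots. An awake robot co-located with a sleeping robot can wake it up and share information with it; the woken robot then acts as an awake robot (in particular it can help wake up others). *)

theory Defs
  imports "HOL-Analysis.Analysis"
begin

definition square :: "real^2 \<Rightarrow> real^2 \<Rightarrow> real^2 \<Rightarrow> real \<Rightarrow> (real^2) set" where
  "square c u v R = {c + a *\<^sub>R u + b *\<^sub>R v | a b. \<bar>a\<bar> \<le> R / 2 \<and> \<bar>b\<bar> \<le> R / 2}"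

definition wakeup_schedule ::
  "'a \<Rightarrow> real^2 \<Rightarrow> 'a set \<Rightarrow> ('a \<Rightarrow> real^2) \<Rightarrow> ('a \<Rightarrow> real \<Rightarrow> real^2)
     \<Rightarrow> ('a \<Rightarrow> real) \<Rightarrow> ('a \<Rightarrow> 'a) \<Rightarrow> bool" where
  "wakeup_schedule r c S pos traj wake waker \<longleftrightarrow>
     wake r = 0 \<and> traj r 0 = c \<and>
     (\<forall>p\<in>insert r S. \<forall>t t'. dist (traj p t) (traj p t') \<le> \<bar>t - t'\<bar>) \<and>
     (\<forall>s\<in>S. \<forall>t. t \<le> wake s \<longrightarrow> traj s t = pos s) \<and>
     (\<forall>s\<in>S. 0 \<le> wake s \<and> waker s \<in> insert r S \<and>
        (waker s = r \<or> wake (waker s) < wake s) \<and>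
        traj (waker s) (wake s) = pos s)"

end

theory Submission
  imports Defs
begin

(* Divide and conquer. The awake robot walks to a sleeping robot s and wakes it; the square is
   cut into two halves, the robot keeps the half containing s and hands the other half to s. In
   its half, each of the two robots walks to a sleeping robot s' of the lower quarter (if there is
   one), wakes it, keeps the rest of that quarter and hands the upper quarter to s'; the four
   quarters are then handled recursively. After reflecting the square so that s lies in its lower
   left quarter below the diagonal, the walk to s' plus the distance from s' to any robot of the
   half is at most (107/50) w for a square of width w. Hence the overhead B(w), the time needed
   beyond reaching the farthest robot of a square of width w, satisfies
   B(w) <= (107/50) w + B(w/2), i.e. B(w) <= (107/25) w. From the centre every robot is within
   w / sqrt 2 < (71/100) w, and 71/100 + 107/25 < 5. *)

section \<open>Trajectories of speed at most one\<close>

lemma lipschitz_on_UNIV_if_le: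
  fixes f g :: "real \<Rightarrow> 'b::metric_space"
  assumes f: "L-lipschitz_on UNIV f" and g: "L-lipschitz_on UNIV g" and fg: "f b = g b"
  shows "L-lipschitz_on UNIV (\<lambda>t. if t \<le> b then f t else g t)"
proof (rule lipschitz_onI)
  fix x y :: real
  let ?I = "{min (min x y) b .. max (max x y) b}"
  have "L-lipschitz_on ?I (\<lambda>t. if t \<le> b then f t else g t)"
    by (rule lipschitz_on_concat[OF lipschitz_on_subset[OF f] lipschitz_on_subset[OF g] fg]) auto
  then show "dist (if x \<le> b then f x else g x) (if y \<le> b then f y else g y) \<le> L * dist x y"
    by (rule lipschitz_onD) auto
qed (rule lipschitz_on_nonneg[OF f])

lemma lipschitz_on_shift:
  fixes f :: "real \<Rightarrow> 'b::metric_space"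
  assumes "L-lipschitz_on UNIV f"
  shows "L-lipschitz_on UNIV (\<lambda>t. f (t - d))"
proof (rule lipschitz_onI)
  fix x y :: real
  show "dist (f (x - d)) (f (y - d)) \<le> L * dist x y"
    using lipschitz_onD[OF assms, of "x - d" "y - d"] by (simp add: dist_real_def)
qed (rule lipschitz_on_nonneg[OF assms])

lemma lipschitz_on_segment_motion:
  fixes p q :: "'b::real_normed_vector"
  shows "1-lipschitz_on UNIV (\<lambda>t. p + min 1 (max 0 (t / dist p q)) *\<^sub>R (q - p))"
proof (rule lipschitz_onI)
  fix t t' :: real
  define d where "d = dist p q"
  have clamp: "\<bar>min 1 (max 0 a) - min 1 (max 0 b)\<bar> \<le> \<bar>a - b\<bar>" for a b :: real
    by (auto simp: min_def max_def abs_if)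
  have "dist (p + min 1 (max 0 (t / d)) *\<^sub>R (q - p)) (p + min 1 (max 0 (t' / d)) *\<^sub>R (q - p))
      = \<bar>min 1 (max 0 (t / d)) - min 1 (max 0 (t' / d))\<bar> * d"
    by (simp add: dist_norm d_def norm_minus_commute flip: scaleR_diff_left)
  also have "\<dots> \<le> \<bar>t / d - t' / d\<bar> * d"
    by (rule mult_right_mono[OF clamp]) (simp add: d_def)
  also have "\<dots> \<le> 1 * dist t t'"
    by (cases "d = 0") (simp_all add: d_def dist_real_def flip: diff_divide_distrib add: abs_divide)
  finally show "dist (p + min 1 (max 0 (t / dist p q)) *\<^sub>R (q - p))
      (p + min 1 (max 0 (t' / dist p q)) *\<^sub>R (q - p)) \<le> 1 * dist t t'"
    by (simp add: d_def)
qed simp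

lemma speed_le_1_iff_lipschitz:
  "(\<forall>t t'. dist (f t) (f t') \<le> \<bar>t - t'\<bar>) \<longleftrightarrow> 1-lipschitz_on UNIV f"
  by (simp add: lipschitz_on_def dist_real_def)

section \<open>Composing wake-up schedules\<close>

definition wakes_within :: "'a \<Rightarrow> real^2 \<Rightarrow> 'a set \<Rightarrow> ('a \<Rightarrow> real^2) \<Rightarrow> real \<Rightarrow> bool" where
  "wakes_within r p S pos T \<longleftrightarrow>
     (\<exists>traj wake waker. wakeup_schedule r p S pos traj wake waker \<and> (\<forall>s\<in>S. wake s \<le> T))"

lemmas wakeup_schedule_lipschitz = wakeup_schedule_def[unfolded speed_le_1_iff_lipschitz]

lemma wakes_within_empty: "wakes_within r p {} pos T"
  unfolding wakes_within_def wakeup_schedule_lipschitz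
  by (rule exI[of _ "\<lambda>_ _. p"]) (auto simp: lipschitz_on_def)

lemma wakes_within_travel:
  assumes "r \<notin> S" and "wakes_within r q S pos T"
  shows "wakes_within r p S pos (dist p q + T)"
proof -
  obtain traj wake waker where sched: "wakeup_schedule r q S pos traj wake waker"
    and deadline: "\<forall>s\<in>S. wake s \<le> T"
    using assms(2) unfolding wakes_within_def by blast
  define d where "d = dist p q"
  define walk where "walk t = p + min 1 (max 0 (t / d)) *\<^sub>R (q - p)" for t
  define traj' where "traj' x t = (if x = r \<and> t \<le> d then walk t else traj x (t - d))" for x t
  define wake' where "wake' x = (if x = r then 0 else wake x + d)" for x
  have "0 \<le> d" by (simp add: d_def)
  have walk_0: "walk 0 = p" and walk_d: "walk d = q"
    by (cases "d = 0"; simp add: walk_def d_def)+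
  have "1-lipschitz_on UNIV (traj' r)"
  proof -
    have "1-lipschitz_on UNIV (\<lambda>t. if t \<le> d then walk t else traj r (t - d))"
      using sched walk_d lipschitz_on_segment_motion[of p q]
      by (intro lipschitz_on_UNIV_if_le lipschitz_on_shift)
        (auto simp: wakeup_schedule_lipschitz walk_def d_def)
    then show ?thesis by (simp add: traj'_def[abs_def])
  qed
  moreover have "1-lipschitz_on UNIV (traj' x)" if "x \<in> S" for x
  proof -
    have "traj' x = (\<lambda>t. traj x (t - d))"
      using that assms(1) by (auto simp: traj'_def)
    then show ?thesis
      using sched that by (auto simp: wakeup_schedule_lipschitz intro: lipschitz_on_shift)
  qed
  moreover have "traj' (waker s) (wake' s) = pos s" if "s \<in> S" for s
    using sched that assms(1) walk_d
    by (cases "wake s = 0") (auto simp: wakeup_schedule_def traj'_def wake'_def)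
  ultimately have "wakeup_schedule r p S pos traj' wake' waker"
    using sched assms(1) \<open>0 \<le> d\<close> walk_0
    by (auto simp: wakeup_schedule_lipschitz traj'_def wake'_def)
  moreover have "\<forall>s\<in>S. wake' s \<le> d + T"
    using deadline assms(1) by (simp add: wake'_def)
  ultimately show ?thesis
    unfolding wakes_within_def d_def by blast
qed

lemma wakes_within_wake_and_split:
  assumes r: "r \<notin> insert s (S1 \<union> S2)" and s: "s \<notin> S1 \<union> S2" and disj: "S1 \<inter> S2 = {}"
    and "0 \<le> T" and "wakes_within r (pos s) S1 pos T" and "wakes_within s (pos s) S2 pos T"
  shows "wakes_within r (pos s) (insert s (S1 \<union> S2)) pos T"
proof -
  obtain traj1 wake1 waker1 where sched1: "wakeup_schedule r (pos s) S1 pos traj1 wake1 waker1"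
    and deadline1: "\<forall>x\<in>S1. wake1 x \<le> T"
    using assms(5) unfolding wakes_within_def by blast
  obtain traj2 wake2 waker2 where sched2: "wakeup_schedule s (pos s) S2 pos traj2 wake2 waker2"
    and deadline2: "\<forall>x\<in>S2. wake2 x \<le> T"
    using assms(6) unfolding wakes_within_def by blast
  \<comment> \<open>Until time 0 the robot s must still sleep at pos s, which its own schedule does not fix.\<close>
  define traj where "traj x = (if x = s then (\<lambda>t. if t \<le> 0 then pos s else traj2 s t)
    else if x \<in> S2 then traj2 x else traj1 x)" for x
  define wake where "wake x = (if x \<in> S2 then wake2 x else if x = s then 0 else wake1 x)" for x
  \<comment> \<open>A robot that s would wake at time 0 is co-located with s, so r wakes it instead.\<close>
  define waker where "waker x = (if x = s then r else if x \<in> S2 then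
    (if waker2 x = s \<and> wake2 x = 0 then r else waker2 x) else waker1 x)" for x
  have "1-lipschitz_on UNIV (traj s)"
    using sched2 unfolding traj_def wakeup_schedule_lipschitz
    by (auto intro!: lipschitz_on_UNIV_if_le lipschitz_on_le[OF lipschitz_on_constant])
  then have lip: "\<forall>x\<in>insert r (insert s (S1 \<union> S2)). 1-lipschitz_on UNIV (traj x)"
    using sched1 sched2 r s by (auto simp: wakeup_schedule_lipschitz traj_def)
  have sleep: "\<forall>x\<in>insert s (S1 \<union> S2). \<forall>t\<le>wake x. traj x t = pos x"
    using sched1 sched2 s disj by (auto simp: wakeup_schedule_def traj_def wake_def)
  have woken: "0 \<le> wake x \<and> waker x \<in> insert r (insert s (S1 \<union> S2)) \<and>
      (waker x = r \<or> wake (waker x) < wake x) \<and> traj (waker x) (wake x) = pos x"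
    if x: "x \<in> insert s (S1 \<union> S2)" for x
    using x
  proof (elim insertE UnE)
    assume "x = s"
    then show ?thesis using sched1 r s by (auto simp: wakeup_schedule_def traj_def wake_def waker_def)
  next
    assume "x \<in> S1"
    then show ?thesis using sched1 r s disj by (auto simp: wakeup_schedule_def traj_def wake_def waker_def)
  next
    assume x2: "x \<in> S2"
    show ?thesis
    proof (cases "waker2 x = s \<and> wake2 x = 0")
      case True
      then have "pos x = pos s" using sched2 x2 by (auto simp: wakeup_schedule_def)
      then show ?thesis
        using True sched1 sched2 x2 r s by (auto simp: wakeup_schedule_def traj_def wake_def waker_def)
    next
      case False
      then show ?thesis
        using sched2 x2 r s disj
        by (auto simp: wakeup_schedule_def traj_def wake_def waker_def order.strict_iff_order)
    qed
  qed
  have "wakeup_schedule r (pos s) (insert s (S1 \<union> S2)) pos traj wake waker"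
    unfolding wakeup_schedule_lipschitz
    using sched1 r lip sleep woken by (auto simp: wakeup_schedule_def traj_def wake_def)
  moreover have "\<forall>x\<in>insert s (S1 \<union> S2). wake x \<le> T"
    using deadline1 deadline2 \<open>0 \<le> T\<close> by (auto simp: wake_def)
  ultimately show ?thesis
    unfolding wakes_within_def by blast
qed

definition wake_overhead :: "('a \<Rightarrow> real^2) \<Rightarrow> 'a set \<Rightarrow> real \<Rightarrow> bool" where
  "wake_overhead pos S \<beta> \<longleftrightarrow>
     (\<forall>r p T. r \<notin> S \<longrightarrow> (\<forall>x\<in>S. dist p (pos x) + \<beta> \<le> T) \<longrightarrow> wakes_within r p S pos T)"

lemma wakes_within_union_via_recruit:
  assumes r: "r \<notin> N \<union> F" and disj: "N \<inter> F = {}" and "0 \<le> \<beta>" and "\<delta> + \<beta> \<le> T"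
    and N: "\<And>N'. N' \<subseteq> N \<Longrightarrow> wake_overhead pos N' \<beta>" and F: "wake_overhead pos F \<beta>"
    and via: "\<forall>s'\<in>N. \<forall>x\<in>N \<union> F. dist p (pos s') + dist (pos s') (pos x) \<le> \<delta>"
    and direct: "\<forall>x\<in>F. dist p (pos x) \<le> \<delta>"
  shows "wakes_within r p (N \<union> F) pos T"
proof (cases "N = {}")
  case True
  then show ?thesis
    using F r direct \<open>\<delta> + \<beta> \<le> T\<close> by (force simp: wake_overhead_def)
next
  case False
  then obtain s' where s': "s' \<in> N" by blast
  define d where "d = dist p (pos s')"
  have "wakes_within r (pos s') (insert s' ((N - {s'}) \<union> F)) pos (T - d)"
  proof (rule wakes_within_wake_and_split)
    show "r \<notin> insert s' (N - {s'} \<union> F)" "s' \<notin> N - {s'} \<union> F" "(N - {s'}) \<inter> F = {}"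
      using r s' disj by auto
    show "0 \<le> T - d"
      using via s' assms(3,4) by (force simp: d_def)
    show "wakes_within r (pos s') (N - {s'}) pos (T - d)"
      using N[of "N - {s'}"] r via s' assms(4) by (force simp: wake_overhead_def d_def)
    show "wakes_within s' (pos s') F pos (T - d)"
      using F via s' disj assms(4) by (force simp: wake_overhead_def d_def)
  qed
  moreover have "insert s' ((N - {s'}) \<union> F) = N \<union> F"
    using s' by blast
  ultimately show ?thesis
    using wakes_within_travel[OF r, of "pos s'" pos "T - d" p] by (simp add: d_def)
qed

section \<open>Distances in a square\<close>

lemma sqrt_le_arith_mean:
  fixes X \<mu> :: real
  assumes "0 \<le> X" and "0 < \<mu>"
  shows "sqrt X \<le> (X / \<mu> + \<mu>) / 2"
  using arith_geo_mean_sqrt[of "X / \<mu>" \<mu>] assms by simp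

lemma sqrt_sum_squares_le:
  fixes x y \<alpha> \<beta> \<gamma> w :: real
  assumes "\<bar>x\<bar> \<le> \<alpha> * w" and "\<bar>y\<bar> \<le> \<beta> * w" and "\<alpha>\<^sup>2 + \<beta>\<^sup>2 \<le> \<gamma>\<^sup>2" and "0 \<le> \<gamma>" and "0 \<le> w"
  shows "sqrt (x\<^sup>2 + y\<^sup>2) \<le> \<gamma> * w"
proof (rule real_le_lsqrt)
  have "x\<^sup>2 \<le> (\<alpha> * w)\<^sup>2" and "y\<^sup>2 \<le> (\<beta> * w)\<^sup>2"
    using assms(1,2) by (simp_all add: abs_le_square_iff[symmetric])
  then have "x\<^sup>2 + y\<^sup>2 \<le> (\<alpha>\<^sup>2 + \<beta>\<^sup>2) * w\<^sup>2"
    by (simp add: power_mult_distrib algebra_simps)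
  also have "\<dots> \<le> (\<gamma> * w)\<^sup>2"
    using assms(3) by (simp add: power_mult_distrib mult_right_mono)
  finally show "x\<^sup>2 + y\<^sup>2 \<le> (\<gamma> * w)\<^sup>2" .
qed (use assms in simp)

lemma two_leg_route_le_unit:
  fixes x y u v a b :: real
  assumes "-1/2 \<le> y" "y \<le> x" "x \<le> 0" and "0 \<le> u" "u \<le> 1/2" "-1/2 \<le> v" "v \<le> 0"
    and "0 \<le> a" "a \<le> 1/2" "0 \<le> b" "b \<le> 1/2"
  shows "sqrt ((x - u)\<^sup>2 + (y - v)\<^sup>2) + sqrt ((u - a)\<^sup>2 + (v - b)\<^sup>2) \<le> 107/50"
proof -
  define P where "P = (x - u)\<^sup>2 + (y - v)\<^sup>2"
  define Q where "Q = (u - a)\<^sup>2 + (v - b)\<^sup>2"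
  \<comment> \<open>Of the triangle containing (x, y), the vertex (-1/2, -1/2) is farthest from (u, v).\<close>
  have P: "P \<le> (u + 1/2)\<^sup>2 + (v + 1/2)\<^sup>2"
  proof (cases "y \<le> v")
    case True
    then have "(x - u)\<^sup>2 \<le> (u + 1/2)\<^sup>2" and "(y - v)\<^sup>2 \<le> (v + 1/2)\<^sup>2"
      using assms by (simp_all add: abs_le_square_iff[symmetric] abs_le_iff)
    then show ?thesis by (simp add: P_def)
  next
    case False
    have "(y - v)\<^sup>2 \<le> (x - v)\<^sup>2"
      using False assms by (simp add: abs_le_square_iff[symmetric] abs_le_iff)
    then have "P \<le> (u - x)\<^sup>2 + (x - v)\<^sup>2"
      by (simp add: P_def power2_commute)
    also have "\<dots> \<le> (u - v)\<^sup>2"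
      using False assms mult_nonneg_nonneg[of "u - x" "x - v"] by (simp add: power2_eq_square algebra_simps)
    also have "\<dots> \<le> (u + 1/2)\<^sup>2"
      using assms by (simp add: abs_le_square_iff[symmetric] abs_le_iff)
    finally show ?thesis by (simp add: add_increasing2)
  qed
  have Q: "Q \<le> 1/4 + (1/2 - v)\<^sup>2"
  proof -
    have "\<bar>u - a\<bar> \<le> \<bar>1/2\<bar>" and "\<bar>v - b\<bar> \<le> \<bar>1/2 - v\<bar>"
      using assms by (auto simp: abs_if)
    then have "(u - a)\<^sup>2 \<le> (1/2)\<^sup>2" and "(v - b)\<^sup>2 \<le> (1/2 - v)\<^sup>2"
      by (simp_all only: abs_le_square_iff)
    then show ?thesis by (simp add: Q_def power2_eq_square)
  qed
  \<comment> \<open>AM-GM, tight on the extremal route (-1/2, -1/2), (1/2, -1/2), (0, 1/2) whose legs have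
    lengths 1 and sqrt(5/4), about 559/500; the products below give chord bounds for the squares.\<close>
  have "sqrt P \<le> (P / 1 + 1) / 2" and "sqrt Q \<le> (Q / (559/500) + 559/500) / 2"
    by (rule sqrt_le_arith_mean; simp add: P_def Q_def)+
  moreover have "0 \<le> u * (1/2 - u)" and "0 \<le> (v + 1/2) * (- v)"
    by (rule mult_nonneg_nonneg; use assms in simp)+
  ultimately have "sqrt P + sqrt Q \<le> 107/50"
    using P Q assms by (simp add: power2_eq_square field_simps)
  then show ?thesis by (simp add: P_def Q_def)
qed

lemma two_leg_route_le:
  fixes x y u v a b w :: real
  assumes "-w/2 \<le> y" "y \<le> x" "x \<le> 0" and "0 \<le> u" "u \<le> w/2" "-w/2 \<le> v" "v \<le> 0"
    and "0 \<le> a" "a \<le> w/2" "0 \<le> b" "b \<le> w/2"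
  shows "sqrt ((x - u)\<^sup>2 + (y - v)\<^sup>2) + sqrt ((u - a)\<^sup>2 + (v - b)\<^sup>2) \<le> 107/50 * w"
proof (cases "w = 0")
  case True
  then have "x = 0" "y = 0" "u = 0" "v = 0" "a = 0" "b = 0" using assms by auto
  then show ?thesis using True by simp
next
  case False
  then have w: "0 < w" using assms by simp
  have scale: "sqrt ((p/w - q/w)\<^sup>2 + (p'/w - q'/w)\<^sup>2) = sqrt ((p - q)\<^sup>2 + (p' - q')\<^sup>2) / w"
    for p q p' q' :: real
    using w by (simp add: power_divide real_sqrt_divide flip: diff_divide_distrib add_divide_distrib)
  have "sqrt ((x/w - u/w)\<^sup>2 + (y/w - v/w)\<^sup>2) + sqrt ((u/w - a/w)\<^sup>2 + (v/w - b/w)\<^sup>2) \<le> 107/50"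
    by (rule two_leg_route_le_unit) (use assms w in \<open>simp_all add: field_simps\<close>)
  then show ?thesis
    using w by (simp add: scale pos_divide_le_eq flip: add_divide_distrib)
qed

lemma corner_route_le:
  fixes a b a' b' a'' b'' w :: real
  assumes "-w/2 \<le> b" "b \<le> a" "a \<le> 0" and "\<bar>a'\<bar> \<le> w/2" "-w/2 \<le> b'" "b' \<le> 0"
    and "\<bar>a''\<bar> \<le> w/2" "\<bar>b''\<bar> \<le> w/2" and "a' \<le> 0 \<longleftrightarrow> a'' \<le> 0"
  shows "sqrt ((a - a')\<^sup>2 + (b - b')\<^sup>2) + sqrt ((a' - a'')\<^sup>2 + (b' - b'')\<^sup>2) \<le> 107/50 * w"
proof -
  have lin: "-w/2 \<le> a'" "a' \<le> w/2" "-w/2 \<le> a''" "a'' \<le> w/2" "-w/2 \<le> b''" "b'' \<le> w/2"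
    using assms(4,7,8) by (simp_all add: abs_le_iff)
  consider "a' \<le> 0" | "0 < a'" "b'' \<le> 0" | "0 < a'" "0 < b''"
    by linarith
  then show ?thesis
  proof cases
    case 1
    have "sqrt ((a - a')\<^sup>2 + (b - b')\<^sup>2) \<le> 71/100 * w"
      by (rule sqrt_sum_squares_le[where \<alpha> = "1/2" and \<beta> = "1/2"]; (rule abs_leI)?)
        (use 1 lin assms in \<open>simp_all add: power2_eq_square\<close>)
    moreover have "sqrt ((a' - a'')\<^sup>2 + (b' - b'')\<^sup>2) \<le> 112/100 * w"
      by (rule sqrt_sum_squares_le[where \<alpha> = "1/2" and \<beta> = 1]; (rule abs_leI)?)
        (use 1 lin assms in \<open>simp_all add: power2_eq_square\<close>)
    ultimately show ?thesis
      using assms by linarith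
  next
    case 2
    have "sqrt ((a - a')\<^sup>2 + (b - b')\<^sup>2) \<le> 112/100 * w"
      by (rule sqrt_sum_squares_le[where \<alpha> = 1 and \<beta> = "1/2"]; (rule abs_leI)?)
        (use 2 lin assms in \<open>simp_all add: power2_eq_square\<close>)
    moreover have "sqrt ((a' - a'')\<^sup>2 + (b' - b'')\<^sup>2) \<le> 71/100 * w"
      by (rule sqrt_sum_squares_le[where \<alpha> = "1/2" and \<beta> = "1/2"]; (rule abs_leI)?)
        (use 2 lin assms in \<open>simp_all add: power2_eq_square\<close>)
    ultimately show ?thesis
      using assms by linarith
  next
    case 3
    then show ?thesis
      using lin assms by (intro two_leg_route_le) auto
  qed
qed

definition orthonormal_pair :: "'a::real_inner \<Rightarrow> 'a \<Rightarrow> bool" where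
  "orthonormal_pair u v \<longleftrightarrow> norm u = 1 \<and> norm v = 1 \<and> u \<bullet> v = 0"

lemma orthonormal_pair_inner:
  assumes "orthonormal_pair u v"
  shows "u \<bullet> u = 1" and "v \<bullet> v = 1" and "u \<bullet> v = 0" and "v \<bullet> u = 0"
  using assms by (simp_all add: orthonormal_pair_def dot_square_norm inner_commute)

lemma orthonormal_pair_swap: "orthonormal_pair u v \<Longrightarrow> orthonormal_pair v u"
  by (simp add: orthonormal_pair_def inner_commute)

lemma orthonormal_pair_scaleR:
  "orthonormal_pair u v \<Longrightarrow> \<bar>\<sigma>\<bar> = 1 \<Longrightarrow> \<bar>\<tau>\<bar> = 1 \<Longrightarrow> orthonormal_pair (\<sigma> *\<^sub>R u) (\<tau> *\<^sub>R v)"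
  by (simp add: orthonormal_pair_def)

lemma dist_orthonormal_coords:
  assumes "orthonormal_pair u v"
  shows "dist (c + a *\<^sub>R u + b *\<^sub>R v) (c + a' *\<^sub>R u + b' *\<^sub>R v) = sqrt ((a - a')\<^sup>2 + (b - b')\<^sup>2)"
proof -
  have "c + a *\<^sub>R u + b *\<^sub>R v - (c + a' *\<^sub>R u + b' *\<^sub>R v) = (a - a') *\<^sub>R u + (b - b') *\<^sub>R v"
    by (simp add: algebra_simps)
  moreover have "inner ((a - a') *\<^sub>R u + (b - b') *\<^sub>R v) ((a - a') *\<^sub>R u + (b - b') *\<^sub>R v)
      = (a - a')\<^sup>2 + (b - b')\<^sup>2"
    using orthonormal_pair_inner[OF assms]
    by (simp add: inner_add_left inner_add_right power2_eq_square)
  ultimately show ?thesis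
    by (simp add: dist_norm norm_eq_sqrt_inner)
qed

lemma square_coords:
  assumes "orthonormal_pair u v" and "z \<in> square c u v R"
  shows "z = c + ((z - c) \<bullet> u) *\<^sub>R u + ((z - c) \<bullet> v) *\<^sub>R v"
    and "\<bar>(z - c) \<bullet> u\<bar> \<le> R/2" and "\<bar>(z - c) \<bullet> v\<bar> \<le> R/2"
proof -
  obtain a b where z: "z = c + a *\<^sub>R u + b *\<^sub>R v" and "\<bar>a\<bar> \<le> R/2" "\<bar>b\<bar> \<le> R/2"
    using assms(2) unfolding square_def by blast
  moreover have "(z - c) \<bullet> u = a" and "(z - c) \<bullet> v = b"
    using orthonormal_pair_inner[OF assms(1)] by (simp_all add: z inner_add_left)
  ultimately show "z = c + ((z - c) \<bullet> u) *\<^sub>R u + ((z - c) \<bullet> v) *\<^sub>R v"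
    and "\<bar>(z - c) \<bullet> u\<bar> \<le> R/2" and "\<bar>(z - c) \<bullet> v\<bar> \<le> R/2"
    by simp_all
qed

lemma dist_in_square:
  assumes "orthonormal_pair u v" and "z \<in> square c u v R" and "z' \<in> square c u v R"
  shows "dist z z' = sqrt (((z - c) \<bullet> u - (z' - c) \<bullet> u)\<^sup>2 + ((z - c) \<bullet> v - (z' - c) \<bullet> v)\<^sup>2)"
  using dist_orthonormal_coords[OF assms(1), of c "(z - c) \<bullet> u" "(z - c) \<bullet> v" "(z' - c) \<bullet> u" "(z' - c) \<bullet> v"]
  by (simp flip: square_coords(1)[OF assms(1,2)] square_coords(1)[OF assms(1,3)])

lemma dist_in_square_le:
  assumes "orthonormal_pair u v" and "z \<in> square c u v w" and "z' \<in> square c u v w"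
  shows "dist z z' \<le> sqrt 2 * w"
  unfolding dist_in_square[OF assms]
  using square_coords(2,3)[OF assms(1,2)] square_coords(2,3)[OF assms(1,3)]
  by (intro sqrt_sum_squares_le[where \<alpha> = 1 and \<beta> = 1]; (rule abs_leI)?) (auto simp: abs_le_iff)

lemma center_in_square: "0 \<le> R \<Longrightarrow> c \<in> square c u v R"
  unfolding square_def by (intro CollectI exI[of _ 0]) simp

lemma dist_center_square_le:
  assumes "orthonormal_pair u v" and "0 \<le> w" and "z \<in> square c u v w"
  shows "dist c z \<le> sqrt 2 / 2 * w"
  unfolding dist_in_square[OF assms(1) center_in_square[OF assms(2)] assms(3)]
  using square_coords(2,3)[OF assms(1,3)] assms(2)
  by (intro sqrt_sum_squares_le[where \<alpha> = "1/2" and \<beta> = "1/2"]) (auto simp: power_divide)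

lemma dist_corner_route_le:
  assumes "orthonormal_pair u v" and "s \<in> square c u v w" "s' \<in> square c u v w" "x \<in> square c u v w"
    and "(s - c) \<bullet> u \<le> 0" "(s - c) \<bullet> v \<le> (s - c) \<bullet> u"
    and "(s' - c) \<bullet> v \<le> 0" "(s' - c) \<bullet> u \<le> 0 \<longleftrightarrow> (x - c) \<bullet> u \<le> 0"
  shows "dist s s' + dist s' x \<le> 107/50 * w"
  unfolding dist_in_square[OF assms(1,2,3)] dist_in_square[OF assms(1,3,4)]
  using square_coords(2,3)[OF assms(1,2)] square_coords(2,3)[OF assms(1,3)] square_coords(2,3)[OF assms(1,4)] assms(5-)
  by (intro corner_route_le) (auto simp: abs_le_iff)

lemma square_quadrant:
  assumes "orthonormal_pair u v" and "z \<in> square c u v w" and "\<sigma> \<in> {-1, 1}" "\<tau> \<in> {-1, 1}"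
    and "0 \<le> \<sigma> * ((z - c) \<bullet> u)" "0 \<le> \<tau> * ((z - c) \<bullet> v)"
  shows "z \<in> square (c + (\<sigma> * w/4) *\<^sub>R u + (\<tau> * w/4) *\<^sub>R v) u v (w/2)"
proof -
  define a b where "a = (z - c) \<bullet> u" and "b = (z - c) \<bullet> v"
  note coords = square_coords[OF assms(1,2), folded a_def b_def]
  have "\<bar>a - \<sigma> * w/4\<bar> \<le> w/2/2" and "\<bar>b - \<tau> * w/4\<bar> \<le> w/2/2"
    using coords(2,3) assms(3-6) by (auto simp: a_def b_def abs_if split: if_splits)
  moreover have "z = (c + (\<sigma> * w/4) *\<^sub>R u + (\<tau> * w/4) *\<^sub>R v) + (a - \<sigma> * w/4) *\<^sub>R u + (b - \<tau> * w/4) *\<^sub>R v"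
    by (subst coords(1)) (simp add: algebra_simps)
  ultimately show ?thesis
    unfolding square_def by blast
qed

lemma square_swap: "square c v u R = square c u v R"
  unfolding square_def by (auto simp: add_ac) (metis add.commute)+

lemma square_scaleR:
  assumes "\<bar>\<sigma>\<bar> = 1" and "\<bar>\<tau>\<bar> = 1"
  shows "square c (\<sigma> *\<^sub>R u) (\<tau> *\<^sub>R v) R = square c u v R"
proof -
  have sub: "square c (\<sigma> *\<^sub>R u) (\<tau> *\<^sub>R v) R \<subseteq> square c u v R"
    if "\<bar>\<sigma>\<bar> = 1" "\<bar>\<tau>\<bar> = 1" for \<sigma> \<tau> :: real and u v
    unfolding square_def using that by (force simp: abs_mult)
  have "\<sigma> * \<sigma> = 1" and "\<tau> * \<tau> = 1"
    using assms by (metis abs_mult_self_eq mult_1)+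
  then have "square c u v R \<subseteq> square c (\<sigma> *\<^sub>R u) (\<tau> *\<^sub>R v) R"
    using sub[of \<sigma> \<tau> "\<sigma> *\<^sub>R u" "\<tau> *\<^sub>R v"] assms by simp
  then show ?thesis
    using sub[OF assms] by blast
qed

lemma orthonormal_pair_corner:
  assumes "orthonormal_pair u v"
  obtains u' v' where "orthonormal_pair u' v'" and "square c u' v' R = square c u v R"
    and "z \<bullet> u' \<le> 0" and "z \<bullet> v' \<le> z \<bullet> u'"
proof -
  define \<sigma> :: real where "\<sigma> = (if z \<bullet> u \<le> 0 then 1 else -1)"
  define \<tau> :: real where "\<tau> = (if z \<bullet> v \<le> 0 then 1 else -1)"
  have \<sigma>\<tau>: "\<bar>\<sigma>\<bar> = 1" "\<bar>\<tau>\<bar> = 1" "z \<bullet> (\<sigma> *\<^sub>R u) = - \<bar>z \<bullet> u\<bar>" "z \<bullet> (\<tau> *\<^sub>R v) = - \<bar>z \<bullet> v\<bar>"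
    by (simp_all add: \<sigma>_def \<tau>_def)
  note frame = orthonormal_pair_scaleR[OF assms \<sigma>\<tau>(1,2)] and square = square_scaleR[OF \<sigma>\<tau>(1,2)]
  show thesis
  proof (cases "\<bar>z \<bullet> u\<bar> \<le> \<bar>z \<bullet> v\<bar>")
    case True
    then show thesis
      using that[OF frame] square \<sigma>\<tau> by simp
  next
    case False
    then show thesis
      using that[OF orthonormal_pair_swap[OF frame]] square square_swap \<sigma>\<tau> by simp
  qed
qed

section \<open>The recursive strategy\<close>

lemma wakes_within_square_from_corner:
  assumes frame: "orthonormal_pair u v" and "0 \<le> w" and sq: "pos ` S \<subseteq> square c u v w"
    and s: "s \<in> S" and r: "r \<notin> S"
    and corner: "(pos s - c) \<bullet> u \<le> 0" "(pos s - c) \<bullet> v \<le> (pos s - c) \<bullet> u"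
    and quarters: "\<And>S' c'. S' \<subseteq> S - {s} \<Longrightarrow> pos ` S' \<subseteq> square c' u v (w/2) \<Longrightarrow>
      wake_overhead pos S' (107/50 * w)"
    and deadline: "107/25 * w \<le> T"
  shows "wakes_within r (pos s) S pos T"
proof -
  define A where "A x = (pos x - c) \<bullet> u" for x
  define B where "B x = (pos x - c) \<bullet> v" for x
  have in_sq: "pos x \<in> square c u v w" if "x \<in> S" for x
    using sq that by blast
  have quarter: "wake_overhead pos S' (107/50 * w)"
    if "S' \<subseteq> S - {s}" "\<sigma> \<in> {-1, 1}" "\<tau> \<in> {-1, 1}" "\<forall>x\<in>S'. 0 \<le> \<sigma> * A x \<and> 0 \<le> \<tau> * B x"
    for S' \<sigma> \<tau>
    using that in_sq unfolding A_def B_def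
    by (intro quarters[OF that(1), of "c + (\<sigma> * w/4) *\<^sub>R u + (\<tau> * w/4) *\<^sub>R v"]
        image_subsetI square_quadrant[OF frame]) auto
  have route: "dist (pos s) (pos s') + dist (pos s') (pos x) \<le> 107/50 * w"
    if "s' \<in> S" "x \<in> S" "B s' \<le> 0" "A s' \<le> 0 \<longleftrightarrow> A x \<le> 0" for s' x
    by (rule dist_corner_route_le[OF frame in_sq[OF s] in_sq[OF that(1)] in_sq[OF that(2)]])
      (use that corner in \<open>simp_all add: A_def B_def\<close>)
  have "sqrt 2 \<le> 107/50"
    by (rule real_le_lsqrt) (simp_all add: power2_eq_square)
  then have direct: "dist (pos s) (pos x) \<le> 107/50 * w" if "x \<in> S" for x
    using dist_in_square_le[OF frame in_sq[OF s] in_sq[OF that]] \<open>0 \<le> w\<close>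
    by (meson mult_right_mono order_trans)
  define LL where "LL = {x \<in> S - {s}. A x \<le> 0 \<and> B x \<le> 0}"
  define UL where "UL = {x \<in> S - {s}. A x \<le> 0 \<and> 0 < B x}"
  define LR where "LR = {x \<in> S - {s}. 0 < A x \<and> B x \<le> 0}"
  define UR where "UR = {x \<in> S - {s}. 0 < A x \<and> 0 < B x}"
  have "wakes_within r (pos s) (LL \<union> UL) pos T"
  proof (rule wakes_within_union_via_recruit[where \<delta> = "107/50 * w"])
    show "wake_overhead pos S' (107/50 * w)" if "S' \<subseteq> LL" for S'
      using that by (intro quarter[of _ "-1" "-1"]) (auto simp: LL_def)
    show "wake_overhead pos UL (107/50 * w)"
      by (intro quarter[of _ "-1" 1]) (auto simp: UL_def)
    show "\<forall>s'\<in>LL. \<forall>x\<in>LL \<union> UL. dist (pos s) (pos s') + dist (pos s') (pos x) \<le> 107/50 * w"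
      by (intro ballI route) (auto simp: LL_def UL_def)
    show "\<forall>x\<in>UL. dist (pos s) (pos x) \<le> 107/50 * w"
      by (intro ballI direct) (auto simp: UL_def)
  qed (use r deadline \<open>0 \<le> w\<close> in \<open>auto simp: LL_def UL_def\<close>)
  moreover have "wakes_within s (pos s) (LR \<union> UR) pos T"
  proof (rule wakes_within_union_via_recruit[where \<delta> = "107/50 * w"])
    show "wake_overhead pos S' (107/50 * w)" if "S' \<subseteq> LR" for S'
      using that by (intro quarter[of _ 1 "-1"]) (auto simp: LR_def)
    show "wake_overhead pos UR (107/50 * w)"
      by (intro quarter[of _ 1 1]) (auto simp: UR_def)
    show "\<forall>s'\<in>LR. \<forall>x\<in>LR \<union> UR. dist (pos s) (pos s') + dist (pos s') (pos x) \<le> 107/50 * w"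
      by (intro ballI route) (auto simp: LR_def UR_def)
    show "\<forall>x\<in>UR. dist (pos s) (pos x) \<le> 107/50 * w"
      by (intro ballI direct) (auto simp: UR_def)
  qed (use deadline \<open>0 \<le> w\<close> in \<open>auto simp: LR_def UR_def\<close>)
  moreover have "S = insert s ((LL \<union> UL) \<union> (LR \<union> UR))" and "s \<notin> (LL \<union> UL) \<union> (LR \<union> UR)"
    and "(LL \<union> UL) \<inter> (LR \<union> UR) = {}"
    using s by (auto simp: LL_def UL_def LR_def UR_def)
  moreover have "0 \<le> T"
    using deadline \<open>0 \<le> w\<close> by linarith
  ultimately show ?thesis
    using r by (metis wakes_within_wake_and_split)
qed

lemma wake_overhead_square:
  assumes "finite S" and "orthonormal_pair u v" and "0 \<le> w" and "pos ` S \<subseteq> square c u v w"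
  shows "wake_overhead pos S (107/25 * w)"
  using assms
proof (induction "card S" arbitrary: S c u v w rule: less_induct)
  case less
  show ?case
    unfolding wake_overhead_def
  proof (intro allI impI)
    fix r p T
    assume r: "r \<notin> S" and reach: "\<forall>x\<in>S. dist p (pos x) + 107/25 * w \<le> T"
    show "wakes_within r p S pos T"
    proof (cases "S = {}")
      case True
      then show ?thesis by (simp add: wakes_within_empty)
    next
      case False
      then obtain s where s: "s \<in> S" by blast
      obtain u' v' where frame: "orthonormal_pair u' v'" and sq: "square c u' v' w = square c u v w"
        and corner: "(pos s - c) \<bullet> u' \<le> 0" "(pos s - c) \<bullet> v' \<le> (pos s - c) \<bullet> u'"
        using orthonormal_pair_corner[OF less.prems(2)] by metis
      have sq': "pos ` S \<subseteq> square c u' v' w"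
        using sq less.prems(4) by simp
      have "wakes_within r (pos s) S pos (T - dist p (pos s))"
      proof (rule wakes_within_square_from_corner[OF frame less.prems(3) sq' s r corner])
        show "107/25 * w \<le> T - dist p (pos s)"
          using reach s by force
        show "wake_overhead pos S' (107/50 * w)"
          if "S' \<subseteq> S - {s}" and "pos ` S' \<subseteq> square c' u' v' (w/2)" for S' c'
        proof -
          have "card S' < card S"
            using that(1) s by (intro psubset_card_mono less.prems(1)) auto
          then have "wake_overhead pos S' (107/25 * (w/2))"
            using that frame less.prems(1,3) by (intro less.hyps) (auto intro: finite_subset)
          then show ?thesis
            by simp
        qed
      qed
      then show ?thesis
        using wakes_within_travel[OF r, of "pos s" pos "T - dist p (pos s)" p] by simp
    qed
  qed
qed

theorem lemma3:
  fixes r :: 'a and S :: "'a set" and pos :: "'a \<Rightarrow> real^2"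
    and c u v :: "real^2" and R :: real
  assumes "finite S" and "r \<notin> S"
    and "norm u = 1" and "norm v = 1" and "u \<bullet> v = 0"
    and "R \<ge> 0"
    and "pos ` S \<subseteq> square c u v R"
  shows "\<exists>traj wake waker. wakeup_schedule r c S pos traj wake waker \<and>
           (\<forall>s\<in>S. wake s \<le> 5 * R)"
proof -
  have frame: "orthonormal_pair u v"
    using assms(3-5) by (simp add: orthonormal_pair_def)
  have "sqrt 2 \<le> 142/100"
    by (rule real_le_lsqrt) (simp_all add: power2_eq_square)
  have "dist c (pos x) + 107/25 * R \<le> 5 * R" if "x \<in> S" for x
  proof -
    have "dist c (pos x) \<le> sqrt 2 / 2 * R"
      using dist_center_square_le[OF frame assms(6)] assms(7) that by blast
    also have "\<dots> \<le> 71/100 * R"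
      using \<open>sqrt 2 \<le> 142/100\<close> assms(6) by (intro mult_right_mono) auto
    finally show ?thesis
      using assms(6) by linarith
  qed
  then have "wakes_within r c S pos (5 * R)"
    using wake_overhead_square[OF assms(1) frame assms(6,7)] assms(2) unfolding wake_overhead_def by blast
  then show ?thesis
    unfolding wakes_within_def .
qed

end
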